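(* Let $e_b>0$ and define $\xi$ by $$\xi e_b=\tfrac12-\tfrac{1}{2\sqrt2}(1-3e_b)+\sqrt{\tfrac{1-(1-3e_b)^2}{24}} .$$ Assume $\xi\ge1$, $e_b<\frac{1}{2(1+\xi)}$ and $e_b<\frac{1}{2\xi}$. For $a\in[0,e_b]$ consider the initial triple $(p_X,p_Y,p_Z)=(e_b-a,\;a,\;\xi e_b-a)$. Fix any finite sequence of B steps and P steps whose first step is a B step, let $(p_X',p_Y',p_Z')$ be the result of applying it, and let $R(a)=1-H_2(p_X'+p_Y')-H_2(p_Z'+p_Y')$. Then the minimum of $R(a)$ over $a\in[0,e_b]$ (the worst case) is attained at $a=0$.
   Context: $H_2(p)=-p\log_2 p-(1-p)\log_2(1-p)$. A B step maps $(p_X,p_Y,p_Z)$ to $p_X'=(p_X^2+p_Y^2)/p_S$, $p_Y'=2p_Xp_Y/p_S$, $p_Z'=2(1-p_X-p_Y-p_Z)p_Z/p_S$ with $p_S=1-2(p_X+p_Y)(1-p_X-p_Y)$. A P step maps $(p_X,p_Y,p_Z)$, with $p_I=1-p_X-p_Y-p_Z$, to $p_X'=3p_I^2(p_X+p_Y)+6p_Ip_Xp_Z+3p_X^2p_Y+p_X^3$, $p_Y'=6p_Ip_Yp_Z+3p_X(p_Y^2+p_Z^2)+3p_Yp_Z^2+p_Y^3$, $p_Z'=3p_I(p_Y^2+p_Z^2)+6p_Xp_Yp_Z+3p_Y^2p_Z+p_Z^3$. This is the (worst-case) two-photon SARG04 initial state, with $e_b$ the bit error rate and $a$ the $Y$-error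 rate. *)

theory Defs
  imports Complex_Main
begin

text \<open>Binary entropy (log base 2). Isabelle's log 2 0 = 0, so H2 0 = H2 1 = 0.\<close>
definition H2 :: "real \<Rightarrow> real" where
  "H2 p = - p * log 2 p - (1 - p) * log 2 (1 - p)"

type_synonym triple = "real \<times> real \<times> real"

definition B_step :: "triple \<Rightarrow> triple" where
  "B_step t = (case t of (pX, pY, pZ) \<Rightarrow>
     let pS = 1 - 2 * (pX + pY) * (1 - pX - pY) in
     ((pX^2 + pY^2) / pS, 2 * pX * pY / pS, 2 * (1 - pX - pY - pZ) * pZ / pS))"

definition P_step :: "triple \<Rightarrow> triple" where
  "P_step t = (case t of (pX, pY, pZ) \<Rightarrow>
     let pI = 1 - pX - pY - pZ in
     (3 * pI^2 * (pX + pY) + 6 * pI * pX * pZ + 3 * pX^2 * pY + pX^3,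
      6 * pI * pY * pZ + 3 * pX * (pY^2 + pZ^2) + 3 * pY * pZ^2 + pY^3,
      3 * pI * (pY^2 + pZ^2) + 6 * pX * pY * pZ + 3 * pY^2 * pZ + pZ^3))"

datatype step = B | P

fun apply_step :: "step \<Rightarrow> triple \<Rightarrow> triple" where
  "apply_step B t = B_step t"
| "apply_step P t = P_step t"

fun apply_steps :: "step list \<Rightarrow> triple \<Rightarrow> triple" where
  "apply_steps [] t = t"
| "apply_steps (s # ss) t = apply_steps ss (apply_step s t)"

definition rate :: "step list \<Rightarrow> real \<Rightarrow> real \<Rightarrow> real \<Rightarrow> real" where
  "rate ss eb xi a = (case apply_steps ss (eb - a, a, xi * eb - a) of
     (pX, pY, pZ) \<Rightarrow> 1 - H2 (pX + pY) - H2 (pZ + pY))"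

end

theory Submission
  imports Defs
begin

text \<open>
  Pass to the Bloch-vector coordinates \<open>b = 1 - 2(p\<^sub>X + p\<^sub>Y)\<close>, \<open>f = 1 - 2(p\<^sub>Y + p\<^sub>Z)\<close>,
  \<open>g = 1 - 2(p\<^sub>X + p\<^sub>Z)\<close>, so that the bit and phase error rates are \<open>(1 - b)/2\<close>
  and \<open>(1 - f)/2\<close>.
  For the initial triple \<open>(e\<^sub>b - a, a, \<xi>e\<^sub>b - a)\<close> only \<open>g = 1 - 2e\<^sub>b - 2\<xi>e\<^sub>b + 4a\<close>
  depends on \<open>a\<close>, and it increases with \<open>a\<close>. After the first B step every triple lies in the
  region \<open>0 < b \<le> 1, 0 \<le> g \<le> f \<le> 1, g \<le> b\<close>; both maps preserve this region and, for
  fixed \<open>b\<close>, are monotone in \<open>(f, g)\<close> on it. Hence the final \<open>f\<close> increases with \<open>a\<close>,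
  so the phase error rate decreases, and since \<open>H\<^sub>2\<close> increases on \<open>[0, 1/2]\<close> the rate
  is smallest at \<open>a = 0\<close>.
\<close>

fun bloch :: "triple \<Rightarrow> triple" where
  "bloch (x, y, z) = (1 - 2*(x+y), 1 - 2*(y+z), 1 - 2*(x+z))"

fun B_bloch :: "triple \<Rightarrow> triple" where
  "B_bloch (b, f, g) = (2*b/(1+b^2), (f^2+g^2)/(1+b^2), 2*f*g/(1+b^2))"

fun P_bloch :: "triple \<Rightarrow> triple" where
  "P_bloch (b, f, g) = (b^3, (3*f - f^3)/2, (3*b^2*g - g^3)/2)"

fun step_bloch :: "step \<Rightarrow> triple \<Rightarrow> triple" where
  "step_bloch B = B_bloch"
| "step_bloch P = P_bloch"

fun rate_bloch :: "triple \<Rightarrow> real" where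
  "rate_bloch (b, f, g) = 1 - H2 ((1 - b)/2) - H2 ((1 - f)/2)"

fun admissible :: "triple \<Rightarrow> bool" where
  "admissible (b, f, g) \<longleftrightarrow> 0 < b \<and> b \<le> 1 \<and> 0 \<le> g \<and> g \<le> f \<and> f \<le> 1 \<and> g \<le> b"

fun le_same_b :: "triple \<Rightarrow> triple \<Rightarrow> bool" where
  "le_same_b (b, f, g) (b', f', g') \<longleftrightarrow> b = b' \<and> f \<le> f' \<and> g \<le> g'"

lemma bloch_B_step: "bloch (B_step t) = B_bloch (bloch t)"
proof -
  obtain x y z where t: "t = (x, y, z)" by (cases t)
  define s where "s = x + y"
  have pS: "1 - 2 * s * (1 - s) = (1 + (1 - 2*s)^2) / 2"
    by (simp add: power2_eq_square algebra_simps)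
  have "0 < 1 + (1 - 2*s)^2" by (simp add: add_pos_nonneg)
  then show ?thesis
    unfolding t B_step_def Let_def
    by (simp add: s_def [symmetric] diff_diff_eq [symmetric] pS divide_simps)
       (simp add: s_def power2_eq_square algebra_simps)
qed

lemma bloch_P_step: "bloch (P_step t) = P_bloch (bloch t)"
  by (cases t) (simp add: P_step_def Let_def power2_eq_square power3_eq_cube algebra_simps)

lemma bloch_apply_steps: "bloch (apply_steps ss t) = fold step_bloch ss (bloch t)"
proof (induction ss arbitrary: t)
  case (Cons s ss)
  then show ?case by (cases s) (simp_all add: bloch_B_step bloch_P_step)
qed simp

lemma rate_eq_rate_bloch:
  "rate ss eb xi a = rate_bloch (fold step_bloch ss (bloch (eb - a, a, xi * eb - a)))"
proof -
  obtain x y z where xyz: "apply_steps ss (eb - a, a, xi * eb - a) = (x, y, z)"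
    by (cases "apply_steps ss (eb - a, a, xi * eb - a)")
  then have "fold step_bloch ss (bloch (eb - a, a, xi * eb - a)) = bloch (x, y, z)"
    by (metis bloch_apply_steps)
  then show ?thesis unfolding rate_def xyz by (simp add: add_divide_distrib add.commute)
qed

lemma H2_nonneg:
  assumes "0 \<le> p" "p \<le> 1"
  shows "0 \<le> H2 p"
proof -
  consider "p = 0" | "p = 1" | "0 < p" "p < 1" using assms by linarith
  then show ?thesis
  proof cases
    case 3
    then have "p * log 2 p \<le> 0" "(1 - p) * log 2 (1 - p) \<le> 0"
      by (simp_all add: mult_nonneg_nonpos)
    then show ?thesis by (simp add: H2_def)
  qed (simp_all add: H2_def)
qed

lemma H2_mono:
  assumes "0 \<le> p" "p \<le> q" "q \<le> 1/2"
  shows "H2 p \<le> H2 q"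
proof (cases "p = 0")
  case True
  then show ?thesis using assms H2_nonneg [of q] by (simp add: H2_def)
next
  case False
  then have "0 < p" using assms by simp
  define h where "h x = - (x * ln x) - (1 - x) * ln (1 - x)" for x :: real
  have "h p \<le> h q"
  proof (rule DERIV_nonneg_imp_increasing_open [OF \<open>p \<le> q\<close>])
    fix x assume "p < x" "x < q"
    then have x: "0 < x" "x \<le> 1 - x" using \<open>0 < p\<close> assms by auto
    have "DERIV h x :> ln (1 - x) - ln x"
      unfolding h_def using x by (auto intro!: derivative_eq_intros)
    moreover have "0 \<le> ln (1 - x) - ln x" using x by simp
    ultimately show "\<exists>y. DERIV h x :> y \<and> y \<ge> 0" by blast
  next
    show "continuous_on {p..q} h"
      unfolding h_def using \<open>0 < p\<close> assms by (intro continuous_intros) auto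
  qed
  moreover have "H2 x = h x / ln 2" if "0 < x" "x < 1" for x
    using that by (simp add: H2_def h_def log_def diff_divide_distrib)
  ultimately show ?thesis using \<open>0 < p\<close> assms by (simp add: divide_right_mono)
qed

lemma cubic_mono:
  fixes x y c :: real
  assumes "0 \<le> x" "x \<le> y" "y^2 \<le> c"
  shows "3*c*x - x^3 \<le> 3*c*y - y^3"
proof -
  have "x^2 \<le> y^2" using assms by (simp add: power_mono)
  have "x*y \<le> y^2" using assms by (simp add: power2_eq_square mult_right_mono)
  have "(3*c*y - y^3) - (3*c*x - x^3) = (y - x) * ((c - y^2) + (c - x*y) + (c - x^2))"
    by (simp add: power2_eq_square power3_eq_cube algebra_simps)
  also have "\<dots> \<ge> 0"
    using assms \<open>x^2 \<le> y^2\<close> \<open>x*y \<le> y^2\<close> by (intro mult_nonneg_nonneg) linarith+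
  finally show ?thesis by simp
qed

lemma admissible_B_bloch:
  assumes "0 < b" "b \<le> 1" "0 \<le> f" "0 \<le> g" "f^2 + g^2 \<le> 1 + b^2" "f*g \<le> b"
  shows "admissible (B_bloch (b, f, g))"
proof -
  have N: "0 < 1 + b^2" by (simp add: add_pos_nonneg)
  have "2*b \<le> 1 + b^2" "2*f*g \<le> f^2 + g^2"
    using zero_le_power2 [of "b - 1"] zero_le_power2 [of "f - g"]
    by (simp_all add: power2_eq_square algebra_simps)
  then show ?thesis using assms N by (simp add: divide_right_mono)
qed

lemma admissible_B_bloch_of_admissible:
  assumes "admissible t"
  shows "admissible (B_bloch t)"
proof -
  obtain b f g where t: "t = (b, f, g)" by (cases t)
  have h: "0 < b" "b \<le> 1" "0 \<le> g" "g \<le> f" "f \<le> 1" "g \<le> b"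
    using assms by (simp_all add: t)
  have "f^2 \<le> 1" "g^2 \<le> b^2" using h by (simp_all add: power_le_one power_mono)
  then have "f^2 + g^2 \<le> 1 + b^2" by linarith
  moreover have "f*g \<le> 1*b" using h by (intro mult_mono) auto
  ultimately show ?thesis unfolding t using h by (intro admissible_B_bloch) auto
qed

lemma admissible_B_bloch_of_le:
  assumes "0 < b" "b \<le> 1" "0 \<le> f" "f \<le> b" "0 \<le> g" "g \<le> f + (1 - b)"
  shows "admissible (B_bloch (b, f, g))"
proof -
  have "g \<le> 1" using assms by simp
  then have "f^2 \<le> b^2" "g^2 \<le> 1" using assms by (simp_all add: power_mono power_le_one)
  then have "f^2 + g^2 \<le> 1 + b^2" by linarith
  moreover have "f*g \<le> b*1" using assms \<open>g \<le> 1\<close> by (intro mult_mono) auto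
  ultimately show ?thesis using assms by (intro admissible_B_bloch) auto
qed

lemma admissible_P_bloch:
  assumes "admissible t"
  shows "admissible (P_bloch t)"
proof -
  obtain b f g where t: "t = (b, f, g)" by (cases t)
  have h: "0 < b" "b \<le> 1" "0 \<le> g" "g \<le> f" "f \<le> 1" "g \<le> b"
    using assms by (simp_all add: t)
  have "b^2 \<le> 1" using h by (simp add: power_le_one)
  have "0 \<le> 3*b^2*0 - 0^3" by simp
  also have "\<dots> \<le> 3*b^2*g - g^3"
    using cubic_mono [of 0 g "b^2"] h by (simp add: power_mono)
  finally have g_nonneg: "0 \<le> 3*b^2*g - g^3" .
  have g_le_b: "3*b^2*g - g^3 \<le> 3*b^2*b - b^3"
    using cubic_mono [of g b "b^2"] h by simp
  have "3*b^2*g - g^3 \<le> 3*1*g - g^3"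
    using h \<open>b^2 \<le> 1\<close> by (simp add: mult_right_mono)
  also have "\<dots> \<le> 3*1*f - f^3"
    using cubic_mono [of g f 1] h by (simp add: power_le_one)
  finally have g_le_f: "3*b^2*g - g^3 \<le> 3*f - f^3" by simp
  have f_le_1: "3*1*f - f^3 \<le> 3*1*1 - 1^3"
    using cubic_mono [of f 1 1] h by simp
  have "3*b^2*b - b^3 = 2*b^3" by (simp add: power2_eq_square power3_eq_cube)
  then show ?thesis
    unfolding t using h g_nonneg g_le_b g_le_f f_le_1 by (simp add: power_le_one)
qed

lemma admissible_step_bloch: "admissible t \<Longrightarrow> admissible (step_bloch s t)"
  by (cases s) (simp_all add: admissible_B_bloch_of_admissible admissible_P_bloch)

lemma admissible_fold_step_bloch: "admissible t \<Longrightarrow> admissible (fold step_bloch ss t)"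
  by (induction ss arbitrary: t) (simp_all add: admissible_step_bloch)

lemma B_bloch_mono:
  assumes "0 \<le> f" "0 \<le> g" "f \<le> f'" "g \<le> g'"
  shows "le_same_b (B_bloch (b, f, g)) (B_bloch (b, f', g'))"
proof -
  have N: "0 < 1 + b^2" by (simp add: add_pos_nonneg)
  have "f^2 + g^2 \<le> f'^2 + g'^2" "f*g \<le> f'*g'"
    using assms by (auto intro: add_mono power_mono mult_mono)
  then show ?thesis using N by (simp add: divide_right_mono)
qed

lemma P_bloch_mono:
  assumes "admissible t" "admissible u" "le_same_b t u"
  shows "le_same_b (P_bloch t) (P_bloch u)"
proof -
  obtain b f g where t: "t = (b, f, g)" by (cases t)
  obtain b' f' g' where u: "u = (b', f', g')" by (cases u)
  have h: "0 \<le> f" "0 \<le> g" "b' = b" "f \<le> f'" "g \<le> g'" "f' \<le> 1" "g' \<le> b" "0 < b"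
    using assms by (auto simp: t u)
  have "3*1*f - f^3 \<le> 3*1*f' - f'^3"
    using cubic_mono [of f f' 1] h by (simp add: power_le_one)
  moreover have "3*b^2*g - g^3 \<le> 3*b^2*g' - g'^3"
    using cubic_mono [of g g' "b^2"] h by (simp add: power_mono)
  ultimately show ?thesis unfolding t u using h by simp
qed

lemma step_bloch_mono:
  assumes "admissible t" "admissible u" "le_same_b t u"
  shows "le_same_b (step_bloch s t) (step_bloch s u)"
proof -
  obtain b f g where t: "t = (b, f, g)" by (cases t)
  obtain b' f' g' where u: "u = (b', f', g')" by (cases u)
  show ?thesis
    using assms B_bloch_mono [of f g f' g' b] P_bloch_mono [of t u]
    by (cases s) (auto simp: t u)
qed

lemma fold_step_bloch_mono:
  "admissible t \<Longrightarrow> admissible u \<Longrightarrow> le_same_b t u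
    \<Longrightarrow> le_same_b (fold step_bloch ss t) (fold step_bloch ss u)"
  by (induction ss arbitrary: t u) (simp_all add: admissible_step_bloch step_bloch_mono)

lemma rate_bloch_mono:
  assumes "admissible t" "admissible u" "le_same_b t u"
  shows "rate_bloch t \<le> rate_bloch u"
proof -
  obtain b f g where t: "t = (b, f, g)" by (cases t)
  obtain b' f' g' where u: "u = (b', f', g')" by (cases u)
  have "0 \<le> f" "f \<le> f'" "f' \<le> 1" "b' = b"
    using assms by (auto simp: t u)
  then have "H2 ((1 - f')/2) \<le> H2 ((1 - f)/2)" by (intro H2_mono) auto
  then show ?thesis unfolding t u using \<open>b' = b\<close> by simp
qed

theorem rate_minimal_at_zero:
  fixes eb xi a :: real
  assumes "0 < eb" "1 \<le> xi" "2 * (1 + xi) * eb < 1"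
    and "ss \<noteq> []" "hd ss = B" "a \<in> {0..eb}"
  shows "rate ss eb xi 0 \<le> rate ss eb xi a"
proof -
  obtain ss' where ss: "ss = B # ss'" using assms(4,5) by (cases ss) auto
  define w where "w = xi * eb"
  define b where "b = 1 - 2*eb"
  define f where "f = 1 - 2*w"
  define g where "g c = 1 - 2*eb - 2*w + 4*c" for c
  have bloch_initial: "bloch (eb - c, c, xi * eb - c) = (b, f, g c)" for c
    by (simp add: w_def b_def f_def g_def)
  have "eb \<le> w" "2 * (eb + w) < 1" using assms by (auto simp: w_def algebra_simps)
  have "0 \<le> a" "a \<le> eb" using assms by auto
  have after_B: "admissible (B_bloch (b, f, g c))" if "c \<in> {0, a}" for c
    using \<open>0 < eb\<close> \<open>eb \<le> w\<close> \<open>2 * (eb + w) < 1\<close> \<open>0 \<le> a\<close> \<open>a \<le> eb\<close> that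
    by (intro admissible_B_bloch_of_le) (auto simp: b_def f_def g_def algebra_simps)
  have "le_same_b (B_bloch (b, f, g 0)) (B_bloch (b, f, g a))"
    using \<open>0 < eb\<close> \<open>eb \<le> w\<close> \<open>2 * (eb + w) < 1\<close> \<open>0 \<le> a\<close>
    by (intro B_bloch_mono) (auto simp: f_def g_def)
  then have "rate_bloch (fold step_bloch ss' (B_bloch (b, f, g 0)))
      \<le> rate_bloch (fold step_bloch ss' (B_bloch (b, f, g a)))"
    using after_B by (intro rate_bloch_mono fold_step_bloch_mono admissible_fold_step_bloch) auto
  then show ?thesis unfolding rate_eq_rate_bloch ss bloch_initial by (simp del: B_bloch.simps)
qed

theorem corollary2:
  fixes eb xi :: real and ss :: "step list"
  assumes "eb > 0"
    and "xi * eb = 1/2 - (1 - 3*eb) / (2 * sqrt 2) + sqrt ((1 - (1 - 3*eb)^2) / 24)"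
    and "xi \<ge> 1"
    and "eb < 1 / (2 * (1 + xi))"
    and "eb < 1 / (2 * xi)"
    and "ss \<noteq> []" and "hd ss = B"
  shows "\<forall>a \<in> {0..eb}. rate ss eb xi 0 \<le> rate ss eb xi a"
proof
  fix a :: real
  assume "a \<in> {0..eb}"
  have "2 * (1 + xi) * eb < 1"
    using assms(3,4) by (simp add: field_simps)
  from rate_minimal_at_zero [OF assms(1,3) this assms(6,7) \<open>a \<in> {0..eb}\<close>]
  show "rate ss eb xi 0 \<le> rate ss eb xi a" .
qed

end
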